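(* Let $v>3$ and let $(X,\mathcal{B})$ be a partial STS$(v)$ with $X=\{1,\dots,v\}$. Then there is a sequencing $\pi=[x_1\,x_2\,\cdots\,x_v]$ of $X$ that is $3$-good for $(X,\mathcal{B})$, i.e. $\{x_i,x_{i+1},x_{i+2}\}\notin\mathcal{B}$ for all $1\le i\le v-2$.
   Context: A partial Steiner triple system of order $v$, PSTS$(v)$, is a pair $(X,\mathcal{B})$ where $X$ is a set of $v$ points and $\mathcal{B}$ is a set of 3-subsets of $X$ (blocks) such that every pair of distinct points lies in at most one block. A sequencing of $X$ is an ordering $[x_1\,x_2\,\cdots\,x_v]$ of all points of $X$, each appearing exactly once. It is $3$-good if no three consecutive points form a block. *)

theory Defs
  imports Main
begin

definition partial_sts :: "'a set \<Rightarrow> 'a set set \<Rightarrow> bool" where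
  "partial_sts X B \<longleftrightarrow>
     (\<forall>b\<in>B. b \<subseteq> X \<and> card b = 3) \<and>
     (\<forall>x y. x \<noteq> y \<longrightarrow> card {b\<in>B. x \<in> b \<and> y \<in> b} \<le> 1)"

definition sequencing :: "'a set \<Rightarrow> 'a list \<Rightarrow> bool" where
  "sequencing X xs \<longleftrightarrow> distinct xs \<and> set xs = X"

definition three_good :: "'a set set \<Rightarrow> 'a list \<Rightarrow> bool" where
  "three_good B xs \<longleftrightarrow>
     (\<forall>i. i + 2 < length xs \<longrightarrow> {xs ! i, xs ! (i+1), xs ! (i+2)} \<notin> B)"

end

theory Submission
  imports Defs
begin

text \<open>The sequencing is built from right to left. In front of a 3-good list \<open>a # b # _\<close>
  at most one new point \<open>x\<close> is forbidden, namely the third point of the block through \<open>a\<close>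
  and \<open>b\<close>; so as long as two unused points remain, one of them can be prepended. Only the
  very last point may be forced, so the last four points are placed together: at most one of
  them is forbidden in front, and at most one has the other three forming a block, which
  leaves enough freedom to order them.\<close>

lemma three_good_Cons_Cons_Cons:
  "three_good B (a # b # c # xs) \<longleftrightarrow> {a, b, c} \<notin> B \<and> three_good B (b # c # xs)"
proof -
  have split_first: "(\<forall>i::nat. P i) \<longleftrightarrow> P 0 \<and> (\<forall>i. P (Suc i))" for P
    by (metis not0_implies_Suc)
  show ?thesis unfolding three_good_def by (subst split_first) simp
qed

lemma three_good_short: "length xs \<le> 2 \<Longrightarrow> three_good B xs"
  unfolding three_good_def by simp

locale partial_linear_space =
  fixes B :: "'a set set"
  assumes block_unique:
    "\<lbrakk>b1 \<in> B; b2 \<in> B; p \<noteq> q; {p, q} \<subseteq> b1; {p, q} \<subseteq> b2\<rbrakk> \<Longrightarrow> b1 = b2"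

lemma partial_sts_partial_linear_space:
  assumes "partial_sts X B" and "finite X"
  shows "partial_linear_space B"
proof
  fix b1 b2 p q
  assume blocks: "b1 \<in> B" "b2 \<in> B" and "p \<noteq> q" and pq: "{p, q} \<subseteq> b1" "{p, q} \<subseteq> b2"
  have "finite B"
    using assms by (metis (no_types, lifting) Pow_iff finite_Pow_iff finite_subset partial_sts_def subsetI)
  moreover have "card {b\<in>B. p \<in> b \<and> q \<in> b} \<le> 1"
    using assms(1) \<open>p \<noteq> q\<close> unfolding partial_sts_def by blast
  ultimately show "b1 = b2"
    using blocks pq by (auto simp: One_nat_def card_le_Suc0_iff_eq)
qed

context partial_linear_space
begin

lemma card_bad_prefixes_le_1:
  assumes "distinct S" "three_good B S" "set S \<inter> R = {}" "finite R"
  shows "card {x\<in>R. \<not> three_good B (x # S)} \<le> 1"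
proof -
  have "x = y" if x: "x \<in> R" "\<not> three_good B (x # S)" and y: "y \<in> R" "\<not> three_good B (y # S)"
    for x y
  proof -
    have "2 \<le> length S"
      using x(2) three_good_short[of "x # S" B] by fastforce
    then obtain a b t where S: "S = a # b # t"
      by (cases S; cases "tl S") auto
    have "{x, a, b} \<in> B" "{y, a, b} \<in> B" "a \<noteq> b"
      using assms(1,2) x(2) y(2) S by (auto simp: three_good_Cons_Cons_Cons)
    then have "{x, a, b} = {y, a, b}"
      using block_unique by blast
    moreover have "x \<notin> {a, b}" "y \<notin> {a, b}"
      using assms(3) x(1) y(1) S by auto
    ultimately show "x = y" by blast
  qed
  then show ?thesis
    using assms(4) by (auto simp: One_nat_def card_le_Suc0_iff_eq)
qed

lemma exists_good_prefix:
  assumes "distinct S" "three_good B S" "set S \<inter> R = {}" "finite R" "2 \<le> card R"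
  obtains x where "x \<in> R" "three_good B (x # S)"
proof -
  have "card {x\<in>R. \<not> three_good B (x # S)} < card R"
    using card_bad_prefixes_le_1[OF assms(1-4)] assms(5) by linarith
  then have "{x\<in>R. \<not> three_good B (x # S)} \<noteq> R"
    by auto
  then show ?thesis using that by blast
qed

lemma card_block_complements_le_1:
  assumes "card R = 4"
  shows "card {u\<in>R. R - {u} \<in> B} \<le> 1"
proof -
  have "finite R" using assms by (metis card.infinite zero_neq_numeral)
  have "u = u'" if u: "u \<in> R" "R - {u} \<in> B" and u': "u' \<in> R" "R - {u'} \<in> B" for u u'
  proof (rule ccontr)
    assume "u \<noteq> u'"
    then have "card (R - {u, u'}) = 2"
      using assms u u' \<open>finite R\<close> by (subst card_Diff_subset) auto
    then obtain p q where "R - {u, u'} = {p, q}" "p \<noteq> q"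
      by (auto simp: card_2_iff)
    then have "R - {u} = R - {u'}"
      using block_unique[OF u(2) u'(2), of p q] by blast
    then show False using u u' \<open>u \<noteq> u'\<close> by blast
  qed
  then show ?thesis
    using \<open>finite R\<close> by (auto simp: One_nat_def card_le_Suc0_iff_eq)
qed

lemma three_good_prefix_of_four:
  assumes R: "card R = 4" and S: "distinct S" "three_good B S" "set S \<inter> R = {}"
  shows "\<exists>r. distinct r \<and> set r = R \<and> three_good B (r @ S)"
proof -
  have "finite R" using R by (metis card.infinite zero_neq_numeral)
  define E where "E = {u\<in>R. R - {u} \<in> B}"
  define F where "F = {u\<in>R. \<not> three_good B (u # S)}"
  have "finite E" "card E \<le> 1"
    using \<open>finite R\<close> card_block_complements_le_1[OF R] unfolding E_def by auto
  have "card (F \<union> E) < card R"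
    using card_Un_le[of F E] card_bad_prefixes_le_1[OF S \<open>finite R\<close>] \<open>card E \<le> 1\<close> R
    unfolding F_def by linarith
  moreover have "finite (F \<union> E)"
    using \<open>finite R\<close> \<open>finite E\<close> unfolding F_def by simp
  ultimately have "\<not> R \<subseteq> F \<union> E"
    using card_mono leD by metis
  then obtain r4 where r4: "r4 \<in> R" "three_good B (r4 # S)" "r4 \<notin> E"
    unfolding F_def by blast
  obtain r3 where r3: "r3 \<in> R - {r4}" "three_good B (r3 # r4 # S)"
    using exists_good_prefix[of "r4 # S" "R - {r4}"] S r4(1,2) R \<open>finite R\<close> by auto
  have "card (R - {r4} - {r3}) = 2"
    using R r3(1) r4(1) \<open>finite R\<close> by simp
  then obtain p1 p2 where p: "R - {r4} - {r3} = {p1, p2}" "p1 \<noteq> p2"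
    by (auto simp: card_2_iff)
  have good: "\<exists>r. distinct r \<and> set r = R \<and> three_good B (r @ S)"
    if "r1 \<notin> E" "{r1, r2} = {p1, p2}" "r1 \<noteq> r2" for r1 r2
  proof -
    have r12: "{r1, r2} = R - {r4} - {r3}"
      using p(1) that(2) by simp
    then have R_eq: "R = {r1, r2, r3, r4}"
      using r3(1) r4(1) by auto
    have dist: "distinct [r1, r2, r3, r4]"
      using r12 that(3) r3(1) by auto
    have "R - {r4} \<notin> B" "R - {r1} \<notin> B"
      using r4(1,3) that(1) R_eq unfolding E_def by simp_all
    moreover have "R - {r4} = {r1, r2, r3}" "R - {r1} = {r2, r3, r4}"
      using dist unfolding R_eq by auto
    ultimately have "{r1, r2, r3} \<notin> B" "{r2, r3, r4} \<notin> B"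
      by simp_all
    then have "three_good B ([r1, r2, r3, r4] @ S)"
      using r3(2) by (simp add: three_good_Cons_Cons_Cons)
    moreover have "set [r1, r2, r3, r4] = R"
      using R_eq by simp
    ultimately show ?thesis
      using dist by (intro exI[of _ "[r1, r2, r3, r4]"]) simp
  qed
  have "p1 \<notin> E \<or> p2 \<notin> E"
    using \<open>finite E\<close> \<open>card E \<le> 1\<close> p(2) by (auto simp: One_nat_def card_le_Suc0_iff_eq)
  then show ?thesis
    using good[of p1 p2] good[of p2 p1] p(2) by auto
qed

lemma three_good_prefix:
  assumes "finite R" "4 \<le> card R" "distinct S" "three_good B S" "set S \<inter> R = {}"
  shows "\<exists>r. distinct r \<and> set r = R \<and> three_good B (r @ S)"
  using assms
proof (induction "card R - 4" arbitrary: R S)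
  case 0
  then show ?case using three_good_prefix_of_four by simp
next
  case (Suc n)
  obtain z where z: "z \<in> R" "three_good B (z # S)"
    using exists_good_prefix[of S R] Suc.prems by auto
  have "\<exists>r. distinct r \<and> set r = R - {z} \<and> three_good B (r @ z # S)"
  proof (rule Suc.hyps(1))
    show "n = card (R - {z}) - 4" "4 \<le> card (R - {z})"
      using Suc.hyps(2) Suc.prems(1) z(1) by auto
  qed (use Suc.prems z in auto)
  then obtain r where r: "distinct r" "set r = R - {z}" "three_good B (r @ z # S)"
    by blast
  then show ?case
    using z by (intro exI[of _ "r @ [z]"]) auto
qed

end

theorem theorem2:
  fixes v :: nat and B :: "nat set set"
  assumes "v > 3"
    and "partial_sts {1..v} B"
  shows "\<exists>xs. sequencing {1..v} xs \<and> three_good B xs"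
proof -
  interpret partial_linear_space B
    using partial_sts_partial_linear_space[OF assms(2)] by simp
  have "\<exists>r. distinct r \<and> set r = {1..v} \<and> three_good B (r @ [])"
    using assms(1) by (intro three_good_prefix) (auto simp: three_good_def)
  then show ?thesis unfolding sequencing_def by simp
qed

end
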